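(* Let $G_3$ be the graph with vertices $v_1,\dots,v_8$ and edges $a_1=v_1v_2$, $a_2=v_2v_3$, $a_3=v_3v_4$, $a_4=v_4v_5$, $a_5=v_1v_5$, $a_6=v_1v_8$, $a_7=v_2v_6$, $a_8=v_3v_6$, $a_9=v_4v_7$, $a_{10}=v_5v_8$, $a_{11}=v_6v_7$, $a_{12}=v_7v_8$. Let $\gamma_1=e_1+e_3+e_{10}+e_{11}$, $\gamma_2=e_2+e_4+e_6+e_{11}$, $\gamma_3=e_3+e_5+e_7+e_{12}$, $\gamma_4=e_2+e_5+e_6+e_7+e_8+2e_9+e_{10}$, $\gamma_5=e_2+e_3+e_5+e_6+e_7+e_9+e_{10}+e_{11}$, $\gamma_6=e_1+e_4+e_8+e_{12}$, $\gamma_7=e_2+e_4+e_5+e_6+e_7+e_8+e_9+e_{12}$, $\gamma_8=e_1+e_8+e_9+e_{10}$. Then any $\gamma\in S(G_3)$ can be uniquely written in one of the following five types, with $l_1,\dots,l_5\in\mathbb{N}$: $T_a$: $l_1\gamma_1+l_2\gamma_2+l_3\gamma_3+l_4\gamma_4+l_5\gamma_5$; $T_b$: $\gamma_8+l_1\gamma_1+l_2\gamma_2+l_3\gamma_3+l_4\gamma_4+l_5\gamma_8$; $T_{c_1}$: $\gamma_6+l_1\gamma_1+l_2\gamma_2+l_3\gamma_3+l_4\gamma_6+l_5\gamma_8$; $T_{c_2}$: $\gamma_4+\gamma_6+l_1\gamma_2+l_2\gamma_3+l_3\gamma_4+l_4\gamma_6+l_5\gamma_8$; $T_{c_3}$: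 $\gamma_7+l_1\gamma_2+l_2\gamma_3+l_3\gamma_4+l_4\gamma_6+l_5\gamma_7$.
   Context: For a finite graph $G$ with edges $a_1,\dots,a_n$, a magic labelling is an assignment of nonnegative integer labels $\alpha_i$ to the edges $a_i$ such that for every vertex $v$ the sum of the labels of the edges incident to $v$ equals the same number $s$ (the magic sum). A labelling is identified with $(\alpha_1,\dots,\alpha_n)\in\mathbb{N}^n$, and $S(G)$ is the set of all magic labellings. $e_i$ is the $i$-th unit vector of $\mathbb{R}^{12}$, $\mathbb{N}=\{0,1,2,\dots\}$. *)

theory Defs
  imports Main
begin

text \<open>Labellings of the 12 edges of G3 are modelled as functions nat => nat
  indexed by 1..12 and vanishing outside {1..12} (i.e. elements of N^12).
  Vertices are 1..8.\<close>

definition G3_edges :: "(nat \<times> nat) list" where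
  "G3_edges = [(1,2), (2,3), (3,4), (4,5), (1,5), (1,8), (2,6), (3,6),
               (4,7), (5,8), (6,7), (7,8)]"

definition G3_edge :: "nat \<Rightarrow> nat \<times> nat" where
  "G3_edge i = G3_edges ! (i - 1)"

definition incident :: "nat \<Rightarrow> nat \<Rightarrow> bool" where
  "incident v i \<longleftrightarrow> v = fst (G3_edge i) \<or> v = snd (G3_edge i)"

definition magic_labelling_G3 :: "(nat \<Rightarrow> nat) \<Rightarrow> bool" where
  "magic_labelling_G3 \<alpha> \<longleftrightarrow>
     (\<forall>i. i \<notin> {1..12} \<longrightarrow> \<alpha> i = 0) \<and>
     (\<exists>s. \<forall>v\<in>{1..8}. (\<Sum>i\<in>{i\<in>{1..12}. incident v i}. \<alpha> i) = s)"

definition S_G3 :: "(nat \<Rightarrow> nat) set" where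
  "S_G3 = {\<alpha>. magic_labelling_G3 \<alpha>}"

definition e :: "nat \<Rightarrow> nat \<Rightarrow> nat" where
  "e i = (\<lambda>j. if j = i then 1 else 0)"

definition gamma :: "nat \<Rightarrow> nat \<Rightarrow> nat" where
  "gamma k = [
      (\<lambda>j. e 1 j + e 3 j + e 10 j + e 11 j),
      (\<lambda>j. e 2 j + e 4 j + e 6 j + e 11 j),
      (\<lambda>j. e 3 j + e 5 j + e 7 j + e 12 j),
      (\<lambda>j. e 2 j + e 5 j + e 6 j + e 7 j + e 8 j + 2 * e 9 j + e 10 j),
      (\<lambda>j. e 2 j + e 3 j + e 5 j + e 6 j + e 7 j + e 9 j + e 10 j + e 11 j),
      (\<lambda>j. e 1 j + e 4 j + e 8 j + e 12 j),
      (\<lambda>j. e 2 j + e 4 j + e 5 j + e 6 j + e 7 j + e 8 j + e 9 j + e 12 j),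
      (\<lambda>j. e 1 j + e 8 j + e 9 j + e 10 j)] ! (k - 1)"

text \<open>gamma k is only used for k in 1..8.\<close>

datatype rtype = Ta | Tb | Tc1 | Tc2 | Tc3

fun repr :: "rtype \<Rightarrow> nat \<Rightarrow> nat \<Rightarrow> nat \<Rightarrow> nat \<Rightarrow> nat \<Rightarrow> nat \<Rightarrow> nat" where
  "repr Ta l1 l2 l3 l4 l5 = (\<lambda>j. l1 * gamma 1 j + l2 * gamma 2 j + l3 * gamma 3 j
       + l4 * gamma 4 j + l5 * gamma 5 j)"
| "repr Tb l1 l2 l3 l4 l5 = (\<lambda>j. gamma 8 j + l1 * gamma 1 j + l2 * gamma 2 j
       + l3 * gamma 3 j + l4 * gamma 4 j + l5 * gamma 8 j)"
| "repr Tc1 l1 l2 l3 l4 l5 = (\<lambda>j. gamma 6 j + l1 * gamma 1 j + l2 * gamma 2 j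
       + l3 * gamma 3 j + l4 * gamma 6 j + l5 * gamma 8 j)"
| "repr Tc2 l1 l2 l3 l4 l5 = (\<lambda>j. gamma 4 j + gamma 6 j + l1 * gamma 2 j
       + l2 * gamma 3 j + l3 * gamma 4 j + l4 * gamma 6 j + l5 * gamma 8 j)"
| "repr Tc3 l1 l2 l3 l4 l5 = (\<lambda>j. gamma 7 j + l1 * gamma 2 j + l2 * gamma 3 j
       + l3 * gamma 4 j + l4 * gamma 6 j + l5 * gamma 7 j)"

end

theory Submission
  imports Defs
begin

text \<open>The eight vertex conditions leave five free coordinates, so a magic labelling
  is determined by a point of a pointed 5-dimensional rational cone. The five types
  form a Stanley decomposition of this cone into disjoint translated simplicial cones:
  which piece contains a labelling, and with which coefficients, is read off by
  linear inequalities in its free coordinates, and uniqueness holds because this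
  read-off inverts every one of the five parametrizations.\<close>

lemma incident_edges_G3:
  "{i\<in>{1..12}. incident 1 i} = {1,5,6}"
  "{i\<in>{1..12}. incident 2 i} = {1,2,7}"
  "{i\<in>{1..12}. incident 3 i} = {2,3,8}"
  "{i\<in>{1..12}. incident 4 i} = {3,4,9}"
  "{i\<in>{1..12}. incident 5 i} = {4,5,10}"
  "{i\<in>{1..12}. incident 6 i} = {7,8,11}"
  "{i\<in>{1..12}. incident 7 i} = {9,11,12}"
  "{i\<in>{1..12}. incident 8 i} = {6,10,12}"
  unfolding atLeastAtMost_upt set_filter[symmetric]
  by (auto simp: incident_def G3_edge_def G3_edges_def upt_rec)

text \<open>The vertex conditions, solved for the dependent coordinates in terms of
  x 1, x 2, x 4, x 8, x 12.\<close>

definition G3_relations :: "(nat \<Rightarrow> nat) \<Rightarrow> bool" where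
  "G3_relations x \<longleftrightarrow>
     x 3 + x 4 + x 8 = x 1 + x 2 + x 12 \<and> x 5 + x 4 = x 2 + x 12 \<and> x 6 = x 2 \<and>
     x 7 + x 4 = x 2 + x 12 \<and> x 9 + x 4 = x 2 + x 8 \<and> x 10 + x 4 = x 1 + x 2 \<and>
     x 11 + x 8 = x 1 + x 2"

lemma S_G3_vanishes: "x \<in> S_G3 \<Longrightarrow> i \<notin> {1..12} \<Longrightarrow> x i = 0"
  by (auto simp: S_G3_def magic_labelling_G3_def)

lemma S_G3_relations:
  assumes "x \<in> S_G3"
  shows "G3_relations x"
proof -
  obtain s where s: "\<forall>v\<in>{1..8}. (\<Sum>i\<in>{i\<in>{1..12}. incident v i}. x i) = s"
    using assms by (auto simp: S_G3_def magic_labelling_G3_def)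
  have "x 1 + x 5 + x 6 = s" "x 1 + x 2 + x 7 = s" "x 2 + x 3 + x 8 = s"
    "x 3 + x 4 + x 9 = s" "x 4 + x 5 + x 10 = s" "x 7 + x 8 + x 11 = s"
    "x 9 + x 11 + x 12 = s" "x 6 + x 10 + x 12 = s"
    using s[rule_format, of 1, unfolded incident_edges_G3]
      s[rule_format, of 2, unfolded incident_edges_G3]
      s[rule_format, of 3, unfolded incident_edges_G3]
      s[rule_format, of 4, unfolded incident_edges_G3]
      s[rule_format, of 5, unfolded incident_edges_G3]
      s[rule_format, of 6, unfolded incident_edges_G3]
      s[rule_format, of 7, unfolded incident_edges_G3]
      s[rule_format, of 8, unfolded incident_edges_G3]
    by (simp_all add: add.assoc)
  then show ?thesis
    unfolding G3_relations_def by linarith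
qed

text \<open>Stated with Suc 0, the simp normal form of 1 :: nat.\<close>

lemma gamma_eq:
  "gamma (Suc 0) = (\<lambda>j. if j \<in> {1,3,10,11} then 1 else 0)"
  "gamma 2 = (\<lambda>j. if j \<in> {2,4,6,11} then 1 else 0)"
  "gamma 3 = (\<lambda>j. if j \<in> {3,5,7,12} then 1 else 0)"
  "gamma 4 = (\<lambda>j. if j = 9 then 2 else if j \<in> {2,5,6,7,8,10} then 1 else 0)"
  "gamma 5 = (\<lambda>j. if j \<in> {2,3,5,6,7,9,10,11} then 1 else 0)"
  "gamma 6 = (\<lambda>j. if j \<in> {1,4,8,12} then 1 else 0)"
  "gamma 7 = (\<lambda>j. if j \<in> {2,4,5,6,7,8,9,12} then 1 else 0)"
  "gamma 8 = (\<lambda>j. if j \<in> {1,8,9,10} then 1 else 0)"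
  by (auto simp: gamma_def e_def numeral_eq_Suc)

lemma repr_vanishes: "j \<notin> {1..12} \<Longrightarrow> repr t l1 l2 l3 l4 l5 j = 0"
  by (cases t) (auto simp: gamma_eq)

definition decode :: "(nat \<Rightarrow> nat) \<Rightarrow> rtype \<times> nat \<times> nat \<times> nat \<times> nat \<times> nat" where
  "decode x =
    (if x 2 \<ge> x 4 + x 8 then (Ta, x 1, x 4, x 12, x 8, x 2 - x 4 - x 8)
     else if x 3 \<ge> x 12 \<and> x 2 \<ge> x 4 \<and> x 1 + x 12 > x 3
       then (Tb, x 3 - x 12, x 4, x 12, x 2 - x 4, x 1 + x 12 - x 3 - 1)
     else if x 1 \<ge> x 8 \<and> x 8 > x 9
       then (Tc1, x 1 - x 8, x 2, x 5, x 8 - x 9 - 1, x 9)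
     else if x 2 > x 11 \<and> x 4 > x 11 \<and> x 1 + x 11 \<ge> x 4
       then (Tc2, x 11, x 3, x 2 - x 11 - 1, x 4 - x 11 - 1, x 1 + x 11 - x 4)
     else (Tc3, x 11, x 3, x 10, x 1, x 2 - x 10 - x 11 - 1))"

lemma decode_repr: "decode (repr t l1 l2 l3 l4 l5) = (t, l1, l2, l3, l4, l5)"
  by (cases t) (simp_all add: decode_def gamma_eq)

lemma edge_index_cases:
  "(j::nat) \<in> {1..12} \<Longrightarrow>
    j = 1 \<or> j = 2 \<or> j = 3 \<or> j = 4 \<or> j = 5 \<or> j = 6 \<or>
    j = 7 \<or> j = 8 \<or> j = 9 \<or> j = 10 \<or> j = 11 \<or> j = 12"
  unfolding atLeastAtMost_iff by arith

lemma G3_relations_repr_Ta: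
  assumes "G3_relations x" "x 4 + x 8 \<le> x 2" "j \<in> {1..12}"
  shows "x j = repr Ta (x 1) (x 4) (x 12) (x 8) (x 2 - x 4 - x 8) j"
  using edge_index_cases[OF assms(3)] assms(1,2) unfolding G3_relations_def
  by (elim disjE; simp add: gamma_eq; linarith)

lemma G3_relations_repr_Tb:
  assumes "G3_relations x" "x 12 \<le> x 3 \<and> x 4 \<le> x 2 \<and> x 3 < x 1 + x 12" "j \<in> {1..12}"
  shows "x j = repr Tb (x 3 - x 12) (x 4) (x 12) (x 2 - x 4) (x 1 + x 12 - x 3 - 1) j"
  using edge_index_cases[OF assms(3)] assms(1,2) unfolding G3_relations_def
  by (elim disjE; simp add: gamma_eq; linarith)

lemma G3_relations_repr_Tc1:
  assumes "G3_relations x" "x 8 \<le> x 1 \<and> x 9 < x 8" "j \<in> {1..12}"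
  shows "x j = repr Tc1 (x 1 - x 8) (x 2) (x 5) (x 8 - x 9 - 1) (x 9) j"
  using edge_index_cases[OF assms(3)] assms(1,2) unfolding G3_relations_def
  by (elim disjE; simp add: gamma_eq; linarith)

lemma G3_relations_repr_Tc2:
  assumes "G3_relations x" "x 11 < x 2 \<and> x 11 < x 4 \<and> x 4 \<le> x 1 + x 11" "j \<in> {1..12}"
  shows "x j = repr Tc2 (x 11) (x 3) (x 2 - x 11 - 1) (x 4 - x 11 - 1) (x 1 + x 11 - x 4) j"
  using edge_index_cases[OF assms(3)] assms(1,2) unfolding G3_relations_def
  by (elim disjE; simp add: gamma_eq; linarith)

lemma G3_relations_repr_Tc3:
  assumes "G3_relations x" "x 10 + x 11 < x 2" "j \<in> {1..12}"
  shows "x j = repr Tc3 (x 11) (x 3) (x 10) (x 1) (x 2 - x 10 - x 11 - 1) j"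
  using edge_index_cases[OF assms(3)] assms(1,2) unfolding G3_relations_def
  by (elim disjE; simp add: gamma_eq; linarith)

text \<open>The five pieces cover the cone: a solution outside the first four pieces
  makes the truncated subtraction in the last coefficient of decode exact.\<close>

lemma G3_relations_Tc3_bound:
  assumes "G3_relations x"
    and "\<not> x 2 \<ge> x 4 + x 8"
    and "\<not> (x 3 \<ge> x 12 \<and> x 2 \<ge> x 4 \<and> x 1 + x 12 > x 3)"
    and "\<not> (x 1 \<ge> x 8 \<and> x 8 > x 9)"
    and "\<not> (x 2 > x 11 \<and> x 4 > x 11 \<and> x 1 + x 11 \<ge> x 4)"
  shows "x 2 > x 10 + x 11"
  using assms unfolding G3_relations_def not_le not_less de_Morgan_conj
  by (elim disjE; linarith)

lemma repr_decode_edge: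
  assumes rel: "G3_relations x" and j: "j \<in> {1..12}"
  shows "x j = (case decode x of (t, l1, l2, l3, l4, l5) \<Rightarrow> repr t l1 l2 l3 l4 l5 j)"
  unfolding decode_def
  using G3_relations_repr_Ta[OF rel _ j] G3_relations_repr_Tb[OF rel _ j]
    G3_relations_repr_Tc1[OF rel _ j] G3_relations_repr_Tc2[OF rel _ j]
    G3_relations_repr_Tc3[OF rel G3_relations_Tc3_bound[OF rel] j]
  by (simp only: prod.case split: if_split) blast

lemma repr_decode:
  assumes "x \<in> S_G3"
  shows "case decode x of (t, l1, l2, l3, l4, l5) \<Rightarrow> x = repr t l1 l2 l3 l4 l5"
proof (cases "decode x")
  case (fields t l1 l2 l3 l4 l5)
  have "x j = repr t l1 l2 l3 l4 l5 j" for j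
    using repr_decode_edge[OF S_G3_relations[OF assms], of j] fields
      S_G3_vanishes[OF assms, of j] repr_vanishes[of j]
    by (cases "j \<in> {1..12}") auto
  with fields show ?thesis
    by auto
qed

theorem mainTheorem7:
  assumes "\<gamma> \<in> S_G3"
  shows "\<exists>!(t, l1, l2, l3, l4, l5). \<gamma> = repr t l1 l2 l3 l4 l5"
proof (rule ex1I[of _ "decode \<gamma>"])
  show "case decode \<gamma> of (t, l1, l2, l3, l4, l5) \<Rightarrow> \<gamma> = repr t l1 l2 l3 l4 l5"
    using repr_decode[OF assms] .
next
  fix y
  assume "case y of (t, l1, l2, l3, l4, l5) \<Rightarrow> \<gamma> = repr t l1 l2 l3 l4 l5"
  then show "y = decode \<gamma>"
    by (auto simp: decode_repr split: prod.splits)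
qed

end
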